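(* Let $\mathcal{SB}=\langle\mathcal{L},A,\to,\text{supp}\rangle$ be an SBAF and $S\subseteq Sent(A)$ a compatible set of sentences. Then $$Arg_w(S)=\bigcup_{i\in\mathbb{N}}R^S_i(Init(S)).$$
   Context: A language is a triple $\mathcal{L}=\langle L,\overline{\cdot},n\rangle$: $L$ is a nonempty set of sentences; $\overline{\cdot}$ assigns to each $s\in L$ a set $\overline{s}\subseteq L$ of sentences incompatible with $s$, and is symmetric; $n$ is a partial naming function assigning to an argument $a$ a sentence $n(a)\in L$ (if undefined, put $\overline{n(a)}:=\emptyset$), with $\overline{n(\langle\{t\},t\rangle)}=\emptyset$. An argument is a pair $a=\langle Prem(a),Conc(a)\rangle$ with $Prem(a)$ a nonempty finite subset of $L$ and $Conc(a)\in L$; $Sent(a):=Prem(a)\cup\{Conc(a)\}$, $Sent(E):=\bigcup_{a\in E}Sent(a)$. Argument $a$ attacks $b$ ($a\to b$) if $Conc(a)\in\overline{s}$ for some $s\in Sent(b)$ or $Conc(a)\in\overline{n(b)}$. An SBAF is $\langle\mathcal{L},A,\to,\text{supp}\rangle$ with $A$ a finite set of arguments. For $E\subseteq A$: $E$ defends $a\in A$ if for every $b\in A$ with $b\to a$ some element of $E$ attacks $b$; $E$ is conflict-free if no $a,b\in E$ with $a\to b$; admissible if conflict-free and defends all its elements. $S$ is compatible if no $s,t\in S$ with $s\in\overline t$. $Arg_s(S):=\{a\in A\mid Prem(a)\subseteq S\text{ and }\overline{n(a)}\cap S=\emptyset\}$; $R^S(E):=\{a\in A\mid a\in Arg_s(S)\text{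 and }E\text{ defends }a\}$; $R^S_0(E):=E$, $R^S_{i+1}(E):=R^S(R^S_i(E))$. For compatible $S$, $Init(S)$ is the largest admissible subset of $\{a\in A\mid Sent(a)\subseteq S\text{ and }\overline{n(a)}\cap S=\emptyset\}$, and $Arg_w(S)$ is the $\subseteq$-least set $E\subseteq A$ with $Init(S)\subseteq E$ and $R^S(E)=E$. *)

theory Defs
  imports Main
begin

text \<open>Sentences have type 's. An argument is a pair (Prem, Conc).
  The incompatibility map is inc :: 's => 's set, the partial naming function
  is nm :: 's arg => 's option.\<close>

type_synonym 's arg = "'s set \<times> 's"

definition Prem :: "'s arg \<Rightarrow> 's set" where "Prem a = fst a"
definition Conc :: "'s arg \<Rightarrow> 's" where "Conc a = snd a"
definition Sent :: "'s arg \<Rightarrow> 's set" where "Sent a = Prem a \<union> {Conc a}"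
definition SentS :: "'s arg set \<Rightarrow> 's set" where "SentS E = (\<Union>a\<in>E. Sent a)"

definition nbar :: "('s \<Rightarrow> 's set) \<Rightarrow> ('s arg \<Rightarrow> 's option) \<Rightarrow> 's arg \<Rightarrow> 's set" where
  "nbar inc nm a = (case nm a of None \<Rightarrow> {} | Some s \<Rightarrow> inc s)"

definition language :: "'s set \<Rightarrow> ('s \<Rightarrow> 's set) \<Rightarrow> ('s arg \<Rightarrow> 's option) \<Rightarrow> bool" where
  "language L inc nm \<longleftrightarrow> L \<noteq> {}
     \<and> (\<forall>s\<in>L. inc s \<subseteq> L)
     \<and> (\<forall>s\<in>L. \<forall>t\<in>L. s \<in> inc t \<longleftrightarrow> t \<in> inc s)
     \<and> (\<forall>a s. nm a = Some s \<longrightarrow> s \<in> L)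
     \<and> (\<forall>t. nbar inc nm ({t}, t) = {})"

definition is_argument :: "'s set \<Rightarrow> 's arg \<Rightarrow> bool" where
  "is_argument L a \<longleftrightarrow> Prem a \<noteq> {} \<and> finite (Prem a) \<and> Prem a \<subseteq> L \<and> Conc a \<in> L"

text \<open>An SBAF (the support relation plays no role in the statement).\<close>
definition sbaf :: "'s set \<Rightarrow> ('s \<Rightarrow> 's set) \<Rightarrow> ('s arg \<Rightarrow> 's option) \<Rightarrow> 's arg set
    \<Rightarrow> ('s arg \<Rightarrow> 's arg \<Rightarrow> bool) \<Rightarrow> bool" where
  "sbaf L inc nm A supp \<longleftrightarrow> language L inc nm \<and> finite A \<and> (\<forall>a\<in>A. is_argument L a)"

definition attacks :: "('s \<Rightarrow> 's set) \<Rightarrow> ('s arg \<Rightarrow> 's option) \<Rightarrow> 's arg \<Rightarrow> 's arg \<Rightarrow> bool" where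
  "attacks inc nm a b \<longleftrightarrow> (\<exists>s\<in>Sent b. Conc a \<in> inc s) \<or> Conc a \<in> nbar inc nm b"

definition defends :: "('s \<Rightarrow> 's set) \<Rightarrow> ('s arg \<Rightarrow> 's option) \<Rightarrow> 's arg set \<Rightarrow> 's arg set \<Rightarrow> 's arg \<Rightarrow> bool" where
  "defends inc nm A E a \<longleftrightarrow> (\<forall>b\<in>A. attacks inc nm b a \<longrightarrow> (\<exists>c\<in>E. attacks inc nm c b))"

definition conflict_free :: "('s \<Rightarrow> 's set) \<Rightarrow> ('s arg \<Rightarrow> 's option) \<Rightarrow> 's arg set \<Rightarrow> bool" where
  "conflict_free inc nm E \<longleftrightarrow> (\<forall>a\<in>E. \<forall>b\<in>E. \<not> attacks inc nm a b)"

definition admissible :: "('s \<Rightarrow> 's set) \<Rightarrow> ('s arg \<Rightarrow> 's option) \<Rightarrow> 's arg set \<Rightarrow> 's arg set \<Rightarrow> bool" where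
  "admissible inc nm A E \<longleftrightarrow> conflict_free inc nm E \<and> (\<forall>a\<in>E. defends inc nm A E a)"

definition compatible :: "('s \<Rightarrow> 's set) \<Rightarrow> 's set \<Rightarrow> bool" where
  "compatible inc S \<longleftrightarrow> (\<forall>s\<in>S. \<forall>t\<in>S. s \<notin> inc t)"

definition Arg_s :: "('s \<Rightarrow> 's set) \<Rightarrow> ('s arg \<Rightarrow> 's option) \<Rightarrow> 's arg set \<Rightarrow> 's set \<Rightarrow> 's arg set" where
  "Arg_s inc nm A S = {a\<in>A. Prem a \<subseteq> S \<and> nbar inc nm a \<inter> S = {}}"

definition RS :: "('s \<Rightarrow> 's set) \<Rightarrow> ('s arg \<Rightarrow> 's option) \<Rightarrow> 's arg set \<Rightarrow> 's set \<Rightarrow> 's arg set \<Rightarrow> 's arg set" where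
  "RS inc nm A S E = {a\<in>A. a \<in> Arg_s inc nm A S \<and> defends inc nm A E a}"

definition Init :: "('s \<Rightarrow> 's set) \<Rightarrow> ('s arg \<Rightarrow> 's option) \<Rightarrow> 's arg set \<Rightarrow> 's set \<Rightarrow> 's arg set" where
  "Init inc nm A S = (GREATEST E. E \<subseteq> {a\<in>A. Sent a \<subseteq> S \<and> nbar inc nm a \<inter> S = {}}
                                 \<and> admissible inc nm A E)"

definition Arg_w :: "('s \<Rightarrow> 's set) \<Rightarrow> ('s arg \<Rightarrow> 's option) \<Rightarrow> 's arg set \<Rightarrow> 's set \<Rightarrow> 's arg set" where
  "Arg_w inc nm A S = (LEAST E. E \<subseteq> A \<and> Init inc nm A S \<subseteq> E \<and> RS inc nm A S E = E)"

end

theory Submission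
  imports Defs
begin

text \<open>Arguments all of whose sentences lie in a compatible S cannot attack each other, so the
  union of all admissible sets of such arguments is admissible; it is Init(S), and admissibility
  gives Init(S) \<subseteq> R^S(Init(S)). As R^S is monotone, its iterates on Init(S) then form an
  increasing chain in the finite set A, which becomes stationary at a fixed point of R^S. Every
  fixed point of R^S above Init(S) contains all iterates, so this stationary value, the union of
  the chain, is Arg_w(S).\<close>

lemma funpow_le_fixpoint:
  fixes f :: "'a::order \<Rightarrow> 'a"
  assumes "mono f" and "x \<le> y" and "f y = y"
  shows "(f ^^ i) x \<le> y"
proof (induction i)
  case 0
  show ?case using \<open>x \<le> y\<close> by simp
next
  case (Suc i)
  with \<open>mono f\<close> have "f ((f ^^ i) x) \<le> f y" by (rule monoD)
  then show ?case using \<open>f y = y\<close> by simp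
qed

lemma mono_chain_in_finite_set_stabilizes:
  fixes c :: "nat \<Rightarrow> 'a set"
  assumes "mono c" and "finite A" and "\<And>i. c i \<subseteq> A"
  obtains n where "\<And>k. n \<le> k \<Longrightarrow> c k = c n"
proof -
  have "range c \<subseteq> Pow A" using assms(3) by blast
  then have "finite (range c)" using \<open>finite A\<close> by (simp add: finite_subset)
  then obtain m where "m \<in> range c" and maximal: "\<forall>X\<in>range c. m \<subseteq> X \<longrightarrow> m = X"
    using finite_has_maximal[of "range c"] by auto
  then obtain n where "m = c n" by blast
  have "c k = c n" if "n \<le> k" for k
    using maximal monoD[OF \<open>mono c\<close> that] \<open>m = c n\<close> by (metis rangeI)
  then show thesis by (rule that)
qed

lemma Least_fixpoint_above_eq_UN_funpow:
  fixes f :: "'a set \<Rightarrow> 'a set"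
  assumes "mono f" and "finite A" and f_subset: "\<And>E. f E \<subseteq> A"
    and "I \<subseteq> A" and "I \<subseteq> f I"
  shows "(LEAST E. E \<subseteq> A \<and> I \<subseteq> E \<and> f E = E) = (\<Union>i. (f ^^ i) I)"
proof -
  define c where "c i = (f ^^ i) I" for i
  have "mono c"
    unfolding mono_def c_def using funpow_mono2[OF \<open>mono f\<close> _ order_refl \<open>I \<subseteq> f I\<close>] by blast
  have c_subset: "c i \<subseteq> A" for i
    using \<open>I \<subseteq> A\<close> f_subset by (cases i) (simp_all add: c_def)
  obtain n where stable: "\<And>k. n \<le> k \<Longrightarrow> c k = c n"
    using mono_chain_in_finite_set_stabilizes[OF \<open>mono c\<close> \<open>finite A\<close> c_subset] by blast
  have "f (c n) = c n"
    using stable[of "Suc n"] by (simp add: c_def)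
  have UN_eq: "(\<Union>i. c i) = c n"
  proof (rule antisym)
    show "(\<Union>i. c i) \<subseteq> c n"
      using monoD[OF \<open>mono c\<close>] stable by (metis UN_least nle_le)
  qed blast
  have "(LEAST E. E \<subseteq> A \<and> I \<subseteq> E \<and> f E = E) = c n"
  proof (rule Least_equality)
    show "c n \<subseteq> A \<and> I \<subseteq> c n \<and> f (c n) = c n"
      using c_subset \<open>f (c n) = c n\<close> monoD[OF \<open>mono c\<close>, of 0 n] by (simp add: c_def)
    show "c n \<subseteq> E" if "E \<subseteq> A \<and> I \<subseteq> E \<and> f E = E" for E
      using funpow_le_fixpoint[OF \<open>mono f\<close>] that by (simp add: c_def)
  qed
  then show ?thesis using UN_eq by (simp add: c_def)
qed

lemma mono_RS: "mono (RS inc nm A S)"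
  unfolding mono_def RS_def defends_def by blast

lemma RS_subset: "RS inc nm A S E \<subseteq> A"
  unfolding RS_def by blast

definition initial_candidates :: "('s \<Rightarrow> 's set) \<Rightarrow> ('s arg \<Rightarrow> 's option) \<Rightarrow> 's arg set \<Rightarrow> 's set
    \<Rightarrow> 's arg set" where
  "initial_candidates inc nm A S = {a\<in>A. Sent a \<subseteq> S \<and> nbar inc nm a \<inter> S = {}}"

lemma conflict_free_initial_candidates:
  assumes "compatible inc S"
  shows "conflict_free inc nm (initial_candidates inc nm A S)"
  using assms
  unfolding conflict_free_def attacks_def initial_candidates_def compatible_def Sent_def
  by blast

lemma conflict_free_subset:
  "conflict_free inc nm E \<Longrightarrow> E' \<subseteq> E \<Longrightarrow> conflict_free inc nm E'"
  unfolding conflict_free_def by blast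

lemma admissible_Union:
  assumes "conflict_free inc nm (\<Union>\<E>)" and "\<And>E. E \<in> \<E> \<Longrightarrow> admissible inc nm A E"
  shows "admissible inc nm A (\<Union>\<E>)"
  using assms unfolding admissible_def defends_def by blast

lemma admissible_Union_admissible_candidates:
  assumes "compatible inc S"
  shows "admissible inc nm A
    (\<Union>{E. E \<subseteq> initial_candidates inc nm A S \<and> admissible inc nm A E})"
proof (rule admissible_Union)
  show "conflict_free inc nm
      (\<Union>{E. E \<subseteq> initial_candidates inc nm A S \<and> admissible inc nm A E})"
    using conflict_free_initial_candidates[OF assms] by (rule conflict_free_subset) blast
qed simp

lemma Init_eq_Union_admissible:
  assumes "compatible inc S"
  shows "Init inc nm A S
    = \<Union>{E. E \<subseteq> initial_candidates inc nm A S \<and> admissible inc nm A E}"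
  unfolding Init_def initial_candidates_def[symmetric]
  using admissible_Union_admissible_candidates[OF assms]
  by (intro Greatest_equality) blast+

lemma Init_subset_initial_candidates:
  assumes "compatible inc S"
  shows "Init inc nm A S \<subseteq> initial_candidates inc nm A S"
  unfolding Init_eq_Union_admissible[OF assms] by blast

lemma admissible_Init:
  assumes "compatible inc S"
  shows "admissible inc nm A (Init inc nm A S)"
  unfolding Init_eq_Union_admissible[OF assms]
  by (rule admissible_Union_admissible_candidates[OF assms])

lemma Init_subset_RS_Init:
  assumes "compatible inc S"
  shows "Init inc nm A S \<subseteq> RS inc nm A S (Init inc nm A S)"
  using admissible_Init[OF assms] Init_subset_initial_candidates[OF assms]
  unfolding RS_def Arg_s_def admissible_def initial_candidates_def Sent_def by blast

theorem mainTheorem7: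
  fixes L :: "'s set" and inc :: "'s \<Rightarrow> 's set" and nm :: "'s arg \<Rightarrow> 's option"
    and A :: "'s arg set" and supp :: "'s arg \<Rightarrow> 's arg \<Rightarrow> bool" and S :: "'s set"
  assumes "sbaf L inc nm A supp"
    and "S \<subseteq> SentS A"
    and "compatible inc S"
  shows "Arg_w inc nm A S = (\<Union>i::nat. (RS inc nm A S ^^ i) (Init inc nm A S))"
proof -
  have "finite A" using assms(1) unfolding sbaf_def by blast
  moreover have "Init inc nm A S \<subseteq> A"
    using Init_subset_initial_candidates[OF assms(3)] unfolding initial_candidates_def by blast
  moreover note Init_subset_RS_Init[OF assms(3)]
  ultimately show ?thesis
    unfolding Arg_w_def by (rule Least_fixpoint_above_eq_UN_funpow[OF mono_RS _ RS_subset])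
qed

end
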